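(* Each of the axioms CORE, JR, PJR, EJR, PJR+, EJR+ and FJR (viewed as a mapping from approval profiles to the set of $k$-committees satisfying it) is a group-satisfaction-threshold (GST) axiom; that is, for each such axiom $X$ there exists a function $\tau:\mathcal A_k\times 2^{\mathcal E}\to\{0,1,\dots,k+1\}$ such that for every profile $P$ and every $W\in\mathcal A_k$: $W\in X(P)$ if and only if for all $G\subseteq\mathcal E$, $\left(\vec w_G-\frac{\tau(W,G)}{k}\vec 1\right)\cdot\mathrm{Hist}(P)<0$.
   Context: $\mathcal A=[m]$, $1\le k\le m$, $\mathcal A_k$ is the set of $k$-subsets of $\mathcal A$, $\mathcal E=2^{\mathcal A}$. A profile is $P=(A_1,\dots,A_n)\in\mathcal E^n$ ($n\ge1$ voters); $\mathrm{Hist}(P)\in\mathbb Z_{\ge0}^{\mathcal E}$ counts occurrences of each ballot. For $G\subseteq\mathcal E$, $\vec w_G\in\{0,1\}^{\mathcal E}$ is the indicator vector of $G$, and $\vec 1$ is the all-ones vector. A "group" is a set $N'\subseteq[n]$ of voters. For $\ell\ge1$, $N'$ is $\ell$-cohesive if $|N'|\ge\ell n/k$ and $|\bigcap_{j\in N'}A_j|\ge\ell$. - CORE: $W\in\mathcal A_k$ is in CORE$(P)$ iff for every nonempty $N'\subseteq[n]$ and every $W'\subseteq\mathcal A$ with $|W'|/k\le|N'|/n$ there is $j\in N'$ with $|A_j\cap W'|\le|A_j\cap W|$. - JR: for every 1-cohesive $N'$ there is $j\in N'$ with $|A_j\cap W|\ge1$. - EJR: for every $\ell\ge1$ and every $\ell$-cohesive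 $N'$ there is $j\in N'$ with $|A_j\cap W|\ge\ell$. - PJR: for every $\ell\ge1$ and every $\ell$-cohesive $N'$, $|W\cap\bigcup_{j\in N'}A_j|\ge\ell$. - EJR+: there are no $a\in\mathcal A\setminus W$, $\ell\ge1$ and $N'$ with $|N'|\ge\ell n/k$ such that every $j\in N'$ has $a\in A_j$ and $|A_j\cap W|<\ell$. - PJR+: there are no $a\in\mathcal A\setminus W$, $\ell\ge1$ and $N'$ with $|N'|\ge\ell n/k$ such that $a\in A_j$ for all $j\in N'$ and $|W\cap\bigcup_{j\in N'}A_j|<\ell$. - FJR: for every $\beta\ge1$, $T\subseteq\mathcal A$ and every $N'$ with $|N'|\ge|T|n/k$ and $|A_j\cap T|\ge\beta$ for all $j\in N'$, there is $j\in N'$ with $|A_j\cap W|\ge\beta$. *)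

theory Defs
  imports Main Complex_Main
begin

(* Ballots: subsets of A (E = Pow A).
   A profile is a nonempty list of ballots; voter j (0 <= j < length P) has ballot P ! j.
   n = length P.  Groups are subsets of {0..<length P}. *)

definition alts :: "nat \<Rightarrow> nat set" where
  "alts m = {1..m}"

definition committees :: "nat \<Rightarrow> nat \<Rightarrow> nat set set" where
  "committees m k = {W. W \<subseteq> alts m \<and> card W = k}"

definition profile :: "nat \<Rightarrow> nat set list \<Rightarrow> bool" where
  "profile m P \<longleftrightarrow> length P \<ge> 1 \<and> (\<forall>j < length P. P ! j \<subseteq> alts m)"

definition voters :: "nat set list \<Rightarrow> nat set" where
  "voters P = {0..<length P}"

definition hist :: "nat set list \<Rightarrow> nat set \<Rightarrow> nat" where
  "hist P B = card {j \<in> voters P. P ! j = B}"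

definition wvec :: "nat set set \<Rightarrow> nat set \<Rightarrow> real" where
  "wvec G B = (if B \<in> G then 1 else 0)"

definition gst_val :: "nat \<Rightarrow> nat \<Rightarrow> nat set list \<Rightarrow> nat set set \<Rightarrow> nat \<Rightarrow> real" where
  "gst_val m k P G t = (\<Sum>B \<in> Pow (alts m). (wvec G B - real t / real k) * real (hist P B))"

definition cohesive :: "nat \<Rightarrow> nat set list \<Rightarrow> nat \<Rightarrow> nat set \<Rightarrow> bool" where
  "cohesive k P l N' \<longleftrightarrow> N' \<subseteq> voters P \<and>
     real (card N') \<ge> real l * real (length P) / real k \<and>
     card (\<Inter>j \<in> N'. P ! j) \<ge> l"

definition CORE :: "nat \<Rightarrow> nat \<Rightarrow> nat set list \<Rightarrow> nat set \<Rightarrow> bool" where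
  "CORE m k P W \<longleftrightarrow> (\<forall>N' W'. N' \<subseteq> voters P \<and> N' \<noteq> {} \<and> W' \<subseteq> alts m \<and>
      real (card W') / real k \<le> real (card N') / real (length P) \<longrightarrow>
      (\<exists>j \<in> N'. card (P ! j \<inter> W') \<le> card (P ! j \<inter> W)))"

definition JR :: "nat \<Rightarrow> nat \<Rightarrow> nat set list \<Rightarrow> nat set \<Rightarrow> bool" where
  "JR m k P W \<longleftrightarrow> (\<forall>N'. cohesive k P 1 N' \<longrightarrow> (\<exists>j \<in> N'. card (P ! j \<inter> W) \<ge> 1))"

definition EJR :: "nat \<Rightarrow> nat \<Rightarrow> nat set list \<Rightarrow> nat set \<Rightarrow> bool" where
  "EJR m k P W \<longleftrightarrow> (\<forall>l N'. l \<ge> 1 \<and> cohesive k P l N' \<longrightarrow>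
      (\<exists>j \<in> N'. card (P ! j \<inter> W) \<ge> l))"

definition PJR :: "nat \<Rightarrow> nat \<Rightarrow> nat set list \<Rightarrow> nat set \<Rightarrow> bool" where
  "PJR m k P W \<longleftrightarrow> (\<forall>l N'. l \<ge> 1 \<and> cohesive k P l N' \<longrightarrow>
      card (W \<inter> (\<Union>j \<in> N'. P ! j)) \<ge> l)"

definition EJR_plus :: "nat \<Rightarrow> nat \<Rightarrow> nat set list \<Rightarrow> nat set \<Rightarrow> bool" where
  "EJR_plus m k P W \<longleftrightarrow> \<not> (\<exists>a l N'. a \<in> alts m - W \<and> l \<ge> 1 \<and> N' \<subseteq> voters P \<and>
      real (card N') \<ge> real l * real (length P) / real k \<and>
      (\<forall>j \<in> N'. a \<in> P ! j \<and> card (P ! j \<inter> W) < l))"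

definition PJR_plus :: "nat \<Rightarrow> nat \<Rightarrow> nat set list \<Rightarrow> nat set \<Rightarrow> bool" where
  "PJR_plus m k P W \<longleftrightarrow> \<not> (\<exists>a l N'. a \<in> alts m - W \<and> l \<ge> 1 \<and> N' \<subseteq> voters P \<and>
      real (card N') \<ge> real l * real (length P) / real k \<and>
      (\<forall>j \<in> N'. a \<in> P ! j) \<and> card (W \<inter> (\<Union>j \<in> N'. P ! j)) < l)"

(* groups N' are taken nonempty here (otherwise T = {} makes FJR unsatisfiable) *)
definition FJR :: "nat \<Rightarrow> nat \<Rightarrow> nat set list \<Rightarrow> nat set \<Rightarrow> bool" where
  "FJR m k P W \<longleftrightarrow> (\<forall>\<beta> T N'. \<beta> \<ge> 1 \<and> T \<subseteq> alts m \<and> N' \<subseteq> voters P \<and> N' \<noteq> {} \<and>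
      real (card N') \<ge> real (card T) * real (length P) / real k \<and>
      (\<forall>j \<in> N'. card (P ! j \<inter> T) \<ge> \<beta>) \<longrightarrow>
      (\<exists>j \<in> N'. card (P ! j \<inter> W) \<ge> \<beta>))"

definition GST :: "nat \<Rightarrow> nat \<Rightarrow> (nat set list \<Rightarrow> nat set \<Rightarrow> bool) \<Rightarrow> bool" where
  "GST m k X \<longleftrightarrow> (\<exists>\<tau> :: nat set \<Rightarrow> nat set set \<Rightarrow> nat.
     (\<forall>W G. \<tau> W G \<le> k + 1) \<and>
     (\<forall>P W. profile m P \<and> W \<in> committees m k \<longrightarrow>
        (X P W \<longleftrightarrow> (\<forall>G. G \<subseteq> Pow (alts m) \<longrightarrow> gst_val m k P G (\<tau> W G) < 0))))"

end

theory Submission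
  imports Defs
begin

text \<open>Each of the seven axioms says that no group \<open>N\<close> of at least \<open>l n / k\<close> voters has a set of
  ballots \<open>G\<close> that witnesses, at level \<open>l\<close>, that \<open>W\<close> under-represents it, and being a witness
  is inherited by nonempty subsets of ballots. Let \<open>\<tau>(W, G)\<close> be the least level \<open>l \<le> k\<close> at which
  \<open>G\<close> is a witness, or \<open>k + 1\<close>. The dot product \<open>(w\<^sub>G - \<tau>/k 1) \<cdot> Hist(P)\<close> equals
  \<open>|S| - \<tau> n / k\<close>, where \<open>S\<close> is the set of voters whose ballot lies in \<open>G\<close>. A violating group
  with ballots \<open>G\<close> is contained in \<open>S\<close>, and conversely, if \<open>|S| \<ge> \<tau> n / k\<close> then \<open>\<tau> \<le> k\<close> and
  \<open>S\<close> itself is a violating group. So \<open>W\<close> satisfies the axiom iff all these dot products are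
  negative.\<close>

lemma finite_alts [simp]: "finite (alts m)"
  by (simp add: alts_def)

lemma finite_voters [simp]: "finite (voters P)"
  by (simp add: voters_def)

lemma card_voters [simp]: "card (voters P) = length P"
  by (simp add: voters_def)

definition supporters :: "nat set list \<Rightarrow> nat set set \<Rightarrow> nat set" where
  "supporters P G = {j \<in> voters P. P ! j \<in> G}"

lemma gst_val_eq:
  assumes "profile m P"
  shows "gst_val m k P G t = real (card (supporters P G)) - real t / real k * real (length P)"
proof -
  have "gst_val m k P G t =
      (\<Sum>B\<in>Pow (alts m). \<Sum>j\<in>{j \<in> voters P. P ! j = B}. wvec G (P ! j) - real t / real k)"
    unfolding gst_val_def hist_def by (intro sum.cong) auto
  also have "\<dots> = (\<Sum>j\<in>voters P. wvec G (P ! j) - real t / real k)"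
    by (rule sum.group) (use assms in \<open>auto simp: profile_def voters_def\<close>)
  also have "\<dots> = (\<Sum>j\<in>voters P. wvec G (P ! j)) - real t / real k * real (length P)"
    by (simp add: sum_subtractf)
  also have "(\<Sum>j\<in>voters P. wvec G (P ! j)) = real (card (supporters P G))"
    by (simp add: wvec_def sum.If_cases supporters_def Collect_conj_eq)
  finally show ?thesis .
qed

definition violates :: "nat \<Rightarrow> nat set list \<Rightarrow> (nat set set \<Rightarrow> nat \<Rightarrow> bool) \<Rightarrow> bool" where
  "violates k P C \<longleftrightarrow> (\<exists>N l. N \<subseteq> voters P \<and> 0 < l \<and>
     real l * real (length P) / real k \<le> real (card N) \<and> C ((!) P ` N) l)"

text \<open>Heredity is what allows passing from a set of ballots to the voters whose ballots lie in it:
  their ballots may form only part of the set.\<close>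

definition hereditary :: "nat \<Rightarrow> (nat set set \<Rightarrow> nat \<Rightarrow> bool) \<Rightarrow> bool" where
  "hereditary m C \<longleftrightarrow> (\<forall>G G' l. C G l \<longrightarrow> G \<subseteq> Pow (alts m) \<longrightarrow> G' \<subseteq> G \<longrightarrow> G' \<noteq> {} \<longrightarrow> C G' l)"

text \<open>The value \<open>k + 1\<close> always qualifies, so the minimum exists; it can never be reached, since
  \<open>(k + 1) n / k > n\<close>.\<close>

definition threshold :: "nat \<Rightarrow> (nat set set \<Rightarrow> nat \<Rightarrow> bool) \<Rightarrow> nat set set \<Rightarrow> nat" where
  "threshold k C G = (LEAST l. 0 < l \<and> (l \<le> k \<longrightarrow> C G l))"

lemma hereditaryD:
  "hereditary m C \<Longrightarrow> C G l \<Longrightarrow> G \<subseteq> Pow (alts m) \<Longrightarrow> G' \<subseteq> G \<Longrightarrow> G' \<noteq> {} \<Longrightarrow> C G' l"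
  unfolding hereditary_def by blast

lemma threshold_le: "threshold k C G \<le> k + 1"
  unfolding threshold_def by (rule Least_le) simp

lemma threshold_pos: "0 < threshold k C G"
  unfolding threshold_def by (rule LeastI2[of _ "k + 1"]) simp_all

lemma threshold_witness: "threshold k C G \<le> k \<Longrightarrow> C G (threshold k C G)"
  unfolding threshold_def using LeastI[of "\<lambda>l. 0 < l \<and> (l \<le> k \<longrightarrow> C G l)" "k + 1"] by simp

lemma threshold_least: "0 < l \<Longrightarrow> C G l \<Longrightarrow> threshold k C G \<le> l"
  using threshold_le[of k C G] unfolding threshold_def by (cases "l \<le> k") (auto intro: Least_le)

lemma ballots_subset_Pow: "profile m P \<Longrightarrow> N \<subseteq> voters P \<Longrightarrow> (!) P ` N \<subseteq> Pow (alts m)"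
  by (fastforce simp: profile_def voters_def)

lemma violates_iff_threshold_reached:
  assumes k: "0 < k" and P: "profile m P" and C: "hereditary m C"
  shows "violates k P C \<longleftrightarrow> (\<exists>G \<subseteq> Pow (alts m).
           real (threshold k C G) * real (length P) / real k \<le> real (card (supporters P G)))"
proof
  assume "violates k P C"
  then obtain N l where N: "N \<subseteq> voters P" "0 < l" "real l * real (length P) / real k \<le> real (card N)"
    and CN: "C ((!) P ` N) l"
    unfolding violates_def by blast
  let ?G = "(!) P ` N"
  have "real (threshold k C ?G) * real (length P) / real k \<le> real l * real (length P) / real k"
    using threshold_least[where k = k and C = C and G = ?G, OF N(2) CN]
    by (simp add: divide_right_mono mult_right_mono)
  also note N(3)
  also have "real (card N) \<le> real (card (supporters P ?G))"
    using N(1) by (auto simp: supporters_def intro!: card_mono)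
  finally show "\<exists>G \<subseteq> Pow (alts m).
      real (threshold k C G) * real (length P) / real k \<le> real (card (supporters P G))"
    using ballots_subset_Pow[OF P N(1)] by blast
next
  assume "\<exists>G \<subseteq> Pow (alts m).
      real (threshold k C G) * real (length P) / real k \<le> real (card (supporters P G))"
  then obtain G where G: "G \<subseteq> Pow (alts m)"
    and reached: "real (threshold k C G) * real (length P) / real k \<le> real (card (supporters P G))"
    by blast
  let ?t = "threshold k C G" and ?S = "supporters P G"
  have n: "0 < length P" using P by (auto simp: profile_def)
  have "card ?S \<le> length P"
    using card_mono[of "voters P" ?S] by (auto simp: supporters_def)
  with reached have "real ?t * real (length P) / real k \<le> real (length P)"
    by linarith
  then have "real ?t \<le> real k"
    using k n by (simp add: pos_divide_le_eq)
  then have CG: "C G ?t"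
    using threshold_witness by simp
  have "0 < real ?t * real (length P) / real k"
    using threshold_pos k n by simp
  with reached have "(!) P ` ?S \<noteq> {}"
    by auto
  moreover have "(!) P ` ?S \<subseteq> G"
    by (auto simp: supporters_def)
  ultimately have "C ((!) P ` ?S) ?t"
    using hereditaryD[OF C CG G] by blast
  moreover have "?S \<subseteq> voters P"
    by (auto simp: supporters_def)
  ultimately show "violates k P C"
    unfolding violates_def using reached threshold_pos by blast
qed

lemma GST_if_violation_characterization:
  assumes k: "0 < k" and C: "\<And>W. hereditary m (C W)"
    and X: "\<And>P W. profile m P \<Longrightarrow> X P W \<longleftrightarrow> \<not> violates k P (C W)"
  shows "GST m k X"
  unfolding GST_def
proof (intro exI conjI allI impI)
  fix W G show "threshold k (C W) G \<le> k + 1" by (rule threshold_le)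
next
  fix P W assume "profile m P \<and> W \<in> committees m k"
  then have P: "profile m P" by simp
  have "X P W \<longleftrightarrow> \<not> violates k P (C W)"
    using X[OF P] .
  also have "\<dots> \<longleftrightarrow> (\<forall>G \<subseteq> Pow (alts m).
      \<not> real (threshold k (C W) G) * real (length P) / real k \<le> real (card (supporters P G)))"
    using violates_iff_threshold_reached[OF k P C] by blast
  also have "\<dots> \<longleftrightarrow> (\<forall>G. G \<subseteq> Pow (alts m) \<longrightarrow> gst_val m k P G (threshold k (C W) G) < 0)"
    by (simp add: gst_val_eq[OF P] not_le)
  finally show "X P W \<longleftrightarrow> (\<forall>G. G \<subseteq> Pow (alts m) \<longrightarrow> gst_val m k P G (threshold k (C W) G) < 0)" .
qed

lemma card_Inter_antimono:
  assumes "finite A" "G \<subseteq> Pow A" "G' \<subseteq> G" "G' \<noteq> {}"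
  shows "card (\<Inter>G) \<le> card (\<Inter>G')"
proof (rule card_mono)
  from assms obtain B where "B \<in> G'" "B \<subseteq> A" by blast
  then show "finite (\<Inter>G')"
    using finite_subset[OF _ \<open>finite A\<close>] by blast
  show "\<Inter>G \<subseteq> \<Inter>G'"
    using assms(3) by (rule Inter_anti_mono)
qed

lemma card_Int_Union_mono:
  assumes "finite A" "G \<subseteq> Pow A" "G' \<subseteq> G"
  shows "card (W \<inter> \<Union>G') \<le> card (W \<inter> \<Union>G)"
proof (rule card_mono)
  show "finite (W \<inter> \<Union>G)"
    using assms(1,2) by (meson Pow_iff Union_least finite_Int finite_subset subset_iff)
  show "W \<inter> \<Union>G' \<subseteq> W \<inter> \<Union>G"
    using assms(3) by blast
qed

definition core_witness :: "nat \<Rightarrow> nat set \<Rightarrow> nat set set \<Rightarrow> nat \<Rightarrow> bool" where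
  "core_witness m W G l \<longleftrightarrow>
     (\<exists>W' \<subseteq> alts m. card W' = l \<and> (\<forall>B\<in>G. card (B \<inter> W) < card (B \<inter> W')))"

definition ejr_witness :: "nat set \<Rightarrow> nat set set \<Rightarrow> nat \<Rightarrow> bool" where
  "ejr_witness W G l \<longleftrightarrow> l \<le> card (\<Inter>G) \<and> (\<forall>B\<in>G. card (B \<inter> W) < l)"

definition jr_witness :: "nat set \<Rightarrow> nat set set \<Rightarrow> nat \<Rightarrow> bool" where
  "jr_witness W G l \<longleftrightarrow> l = 1 \<and> ejr_witness W G l"

definition pjr_witness :: "nat set \<Rightarrow> nat set set \<Rightarrow> nat \<Rightarrow> bool" where
  "pjr_witness W G l \<longleftrightarrow> l \<le> card (\<Inter>G) \<and> card (W \<inter> \<Union>G) < l"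

definition ejr_plus_witness :: "nat \<Rightarrow> nat set \<Rightarrow> nat set set \<Rightarrow> nat \<Rightarrow> bool" where
  "ejr_plus_witness m W G l \<longleftrightarrow> (\<exists>a \<in> alts m - W. \<forall>B\<in>G. a \<in> B \<and> card (B \<inter> W) < l)"

definition pjr_plus_witness :: "nat \<Rightarrow> nat set \<Rightarrow> nat set set \<Rightarrow> nat \<Rightarrow> bool" where
  "pjr_plus_witness m W G l \<longleftrightarrow> (\<exists>a \<in> alts m - W. (\<forall>B\<in>G. a \<in> B) \<and> card (W \<inter> \<Union>G) < l)"

definition fjr_witness :: "nat \<Rightarrow> nat set \<Rightarrow> nat set set \<Rightarrow> nat \<Rightarrow> bool" where
  "fjr_witness m W G l \<longleftrightarrow> (\<exists>\<beta> \<ge> 1. \<exists>T \<subseteq> alts m. card T = l \<and>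
     (\<forall>B\<in>G. \<beta> \<le> card (B \<inter> T) \<and> card (B \<inter> W) < \<beta>))"

lemma hereditary_core_witness: "hereditary m (core_witness m W)"
  unfolding hereditary_def core_witness_def by blast

lemma hereditary_ejr_witness: "hereditary m (ejr_witness W)"
  unfolding hereditary_def ejr_witness_def
  by (meson card_Inter_antimono[OF finite_alts] order_trans subsetD)

lemma hereditary_jr_witness: "hereditary m (jr_witness W)"
  using hereditary_ejr_witness unfolding hereditary_def jr_witness_def by blast

lemma hereditary_pjr_witness: "hereditary m (pjr_witness W)"
  unfolding hereditary_def pjr_witness_def
  by (meson card_Inter_antimono[OF finite_alts] card_Int_Union_mono[OF finite_alts]
      order_trans le_less_trans)

lemma hereditary_ejr_plus_witness: "hereditary m (ejr_plus_witness m W)"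
  unfolding hereditary_def ejr_plus_witness_def by (meson subsetD)

lemma hereditary_pjr_plus_witness: "hereditary m (pjr_plus_witness m W)"
  unfolding hereditary_def pjr_plus_witness_def
  by (meson card_Int_Union_mono[OF finite_alts] le_less_trans subsetD)

lemma hereditary_fjr_witness: "hereditary m (fjr_witness m W)"
  unfolding hereditary_def fjr_witness_def by blast

lemma large_group_nonempty:
  assumes "0 < k" "profile m P" "0 < l" "real l * real (length P) / real k \<le> real (card N)"
  shows "N \<noteq> {}"
proof
  assume "N = {}"
  moreover have "0 < length P"
    using assms(2) by (auto simp: profile_def)
  then have "0 < real l * real (length P) / real k"
    using assms(1,3) by simp
  ultimately show False
    using assms(4) by simp
qed

lemma not_violates_iff:
  "\<not> violates k P C \<longleftrightarrow> (\<forall>N l. N \<subseteq> voters P \<longrightarrow> 0 < l \<longrightarrow>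
     real l * real (length P) / real k \<le> real (card N) \<longrightarrow> \<not> C ((!) P ` N) l)"
  by (auto simp: violates_def)

lemma JR_iff: "JR m k P W \<longleftrightarrow> \<not> violates k P (jr_witness W)"
  unfolding JR_def not_violates_iff jr_witness_def ejr_witness_def cohesive_def
  by (simp add: not_less Suc_le_eq) blast

lemma EJR_iff: "EJR m k P W \<longleftrightarrow> \<not> violates k P (ejr_witness W)"
  unfolding EJR_def not_violates_iff ejr_witness_def cohesive_def
  by (simp add: not_less Suc_le_eq) blast

lemma PJR_iff: "PJR m k P W \<longleftrightarrow> \<not> violates k P (pjr_witness W)"
  unfolding PJR_def not_violates_iff pjr_witness_def cohesive_def
  by (simp add: not_less Suc_le_eq) blast

lemma EJR_plus_iff: "EJR_plus m k P W \<longleftrightarrow> \<not> violates k P (ejr_plus_witness m W)"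
  unfolding EJR_plus_def violates_def ejr_plus_witness_def
  by (simp add: Suc_le_eq) blast

lemma PJR_plus_iff: "PJR_plus m k P W \<longleftrightarrow> \<not> violates k P (pjr_plus_witness m W)"
  unfolding PJR_plus_def violates_def pjr_plus_witness_def
  by (simp add: Suc_le_eq) blast

lemma card_gt_0_if_Int_card_gt_0: "finite A \<Longrightarrow> 0 < card (B \<inter> A) \<Longrightarrow> 0 < card A"
  by (metis card_gt_0_iff inf_bot_right)

lemma CORE_iff:
  assumes k: "0 < k" and P: "profile m P"
  shows "CORE m k P W \<longleftrightarrow> \<not> violates k P (core_witness m W)"
proof -
  have n: "0 < length P"
    using P by (auto simp: profile_def)
  have quota: "real (card W') / real k \<le> real (card N) / real (length P) \<longleftrightarrow>
      real (card W') * real (length P) / real k \<le> real (card N)" for W' N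
    using k n by (simp add: field_simps)
  have "\<not> CORE m k P W \<longleftrightarrow> violates k P (core_witness m W)"
  proof
    assume "\<not> CORE m k P W"
    then obtain N W' where N: "N \<subseteq> voters P" "N \<noteq> {}" and W': "W' \<subseteq> alts m"
      and large: "real (card W') * real (length P) / real k \<le> real (card N)"
      and improves: "\<forall>j\<in>N. card (P ! j \<inter> W) < card (P ! j \<inter> W')"
      unfolding CORE_def quota by (auto simp: not_le)
    from N(2) improves obtain j where "0 < card (P ! j \<inter> W')"
      by fastforce
    then have "0 < card W'"
      using W' by (meson card_gt_0_if_Int_card_gt_0 finite_alts finite_subset)
    with N W' large improves show "violates k P (core_witness m W)"
      unfolding violates_def core_witness_def by blast
  next
    assume "violates k P (core_witness m W)"
    then obtain N W' where N: "N \<subseteq> voters P" and W': "W' \<subseteq> alts m" "0 < card W'"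
      and large: "real (card W') * real (length P) / real k \<le> real (card N)"
      and improves: "\<forall>j\<in>N. card (P ! j \<inter> W) < card (P ! j \<inter> W')"
      unfolding violates_def core_witness_def by auto
    have "N \<noteq> {}"
      using large_group_nonempty[OF k P W'(2) large] .
    show "\<not> CORE m k P W"
    proof
      assume "CORE m k P W"
      then obtain j where "j \<in> N" "card (P ! j \<inter> W') \<le> card (P ! j \<inter> W)"
        using N W' large \<open>N \<noteq> {}\<close> unfolding CORE_def quota by blast
      with improves show False
        by fastforce
    qed
  qed
  then show ?thesis by blast
qed

lemma FJR_iff:
  assumes k: "0 < k" and P: "profile m P"
  shows "FJR m k P W \<longleftrightarrow> \<not> violates k P (fjr_witness m W)"
proof -
  have "\<not> FJR m k P W \<longleftrightarrow> violates k P (fjr_witness m W)"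
  proof
    assume "\<not> FJR m k P W"
    then obtain \<beta> T N where \<beta>: "1 \<le> \<beta>" and T: "T \<subseteq> alts m" and N: "N \<subseteq> voters P" "N \<noteq> {}"
      and large: "real (card T) * real (length P) / real k \<le> real (card N)"
      and demand: "\<forall>j\<in>N. \<beta> \<le> card (P ! j \<inter> T)"
      and unsatisfied: "\<forall>j\<in>N. card (P ! j \<inter> W) < \<beta>"
      unfolding FJR_def by (auto simp: not_le)
    from N(2) demand \<beta> obtain j where "0 < card (P ! j \<inter> T)"
      by fastforce
    then have "0 < card T"
      using T by (meson card_gt_0_if_Int_card_gt_0 finite_alts finite_subset)
    moreover have "fjr_witness m W ((!) P ` N) (card T)"
      unfolding fjr_witness_def using \<beta> T demand unsatisfied by blast
    ultimately show "violates k P (fjr_witness m W)"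
      unfolding violates_def using N(1) large by blast
  next
    assume "violates k P (fjr_witness m W)"
    then obtain \<beta> T N where \<beta>: "1 \<le> \<beta>" and T: "T \<subseteq> alts m" "0 < card T" and N: "N \<subseteq> voters P"
      and large: "real (card T) * real (length P) / real k \<le> real (card N)"
      and demand: "\<forall>j\<in>N. \<beta> \<le> card (P ! j \<inter> T)"
      and unsatisfied: "\<forall>j\<in>N. card (P ! j \<inter> W) < \<beta>"
      unfolding violates_def fjr_witness_def by auto
    have "N \<noteq> {}"
      using large_group_nonempty[OF k P T(2) large] .
    show "\<not> FJR m k P W"
    proof
      assume fjr: "FJR m k P W"
      obtain j where "j \<in> N" "\<beta> \<le> card (P ! j \<inter> W)"
        using fjr[unfolded FJR_def, rule_format, of \<beta> T N] \<beta> T(1) N large demand \<open>N \<noteq> {}\<close>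
        by blast
      with unsatisfied show False
        by fastforce
    qed
  qed
  then show ?thesis by blast
qed

theorem theorem3:
  fixes m k :: nat
  assumes "1 \<le> k" and "k \<le> m"
  shows "GST m k (CORE m k) \<and> GST m k (JR m k) \<and> GST m k (PJR m k) \<and>
         GST m k (EJR m k) \<and> GST m k (PJR_plus m k) \<and> GST m k (EJR_plus m k) \<and>
         GST m k (FJR m k)"
proof -
  have k: "0 < k"
    using assms(1) by simp
  note GST = GST_if_violation_characterization[OF k]
  show ?thesis
  proof (intro conjI)
    show "GST m k (CORE m k)"
      by (rule GST[where C = "core_witness m", OF hereditary_core_witness CORE_iff[OF k]])
    show "GST m k (JR m k)"
      by (rule GST[where C = jr_witness, OF hereditary_jr_witness JR_iff])
    show "GST m k (PJR m k)"
      by (rule GST[where C = pjr_witness, OF hereditary_pjr_witness PJR_iff])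
    show "GST m k (EJR m k)"
      by (rule GST[where C = ejr_witness, OF hereditary_ejr_witness EJR_iff])
    show "GST m k (PJR_plus m k)"
      by (rule GST[where C = "pjr_plus_witness m", OF hereditary_pjr_plus_witness PJR_plus_iff])
    show "GST m k (EJR_plus m k)"
      by (rule GST[where C = "ejr_plus_witness m", OF hereditary_ejr_plus_witness EJR_plus_iff])
    show "GST m k (FJR m k)"
      by (rule GST[where C = "fjr_witness m", OF hereditary_fjr_witness FJR_iff[OF k]])
  qed
qed

end
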